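(* Let $A, B$ be $2n\times 2n$ real symmetric positive semidefinite matrices whose kernels are symplectic subspaces of $\mathbb{R}^{2n}$. If $d(A) \prec^w_+ d(B)$, then there exist a probability vector $(p(\pi))_{\pi\in S_n}$, symplectic matrices $K_\pi\in\operatorname{Sp}(2n)$ ($\pi\in S_n$) and $M\in\operatorname{Sp}(2n)$, and $2n\times 2n$ diagonal matrices $D_\pi$ ($\pi\in S_n$) with strictly positive diagonal entries, such that $$A = \sum_{\pi\in S_n} p(\pi)\,(K_\pi D_\pi M)^T B\, (K_\pi D_\pi M).$$
   Context: Let $J = \begin{bmatrix} 0 & I_n \\ -I_n & 0\end{bmatrix}$. A real $2n\times 2n$ matrix $M$ is symplectic if $M^TJM = J$; $\operatorname{Sp}(2n)$ denotes the group of such matrices. A linear subspace $W\subseteq\mathbb{R}^{2n}$ is symplectic if for every $0\neq u\in W$ there is $v\in W$ with $u^TJv\neq 0$. For a real symmetric positive semidefinite $2n\times 2n$ matrix $A$ whose kernel is a symplectic subspace, there is $M\in\operatorname{Sp}(2n)$ with $M^TAM = D\oplus D$ where $D$ is an $n\times n$ diagonal matrix with non-negative entries, unique up to permutation of its diagonal entries; these are the symplectic eigenvalues of $A$, and $d(A) = (d_1(A),\dots,d_n(A))$ denotes them in non-decreasing order. $S_n$ is the symmetric group on $\{1,\dots,n\}$. An $n\times n$ real matrix is doubly stochastic if its entries are non-negative and every row and column sums to $1$; an $n\times n$ real matrix $S=[s_{ij}]$ is doubly superstochastic if there is a doubly stochastic $E=[e_{ij}]$ with $s_{ij}\ge e_{ij}$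 for all $i,j$. For $x,y\in\mathbb{R}^n$, $x\prec^w_+ y$ means $x = Sy$ for some doubly superstochastic $n\times n$ matrix $S$ all of whose entries are strictly positive. *)

theory Defs
  imports "HOL-Analysis.Analysis" "HOL-Combinatorics.Permutations"
begin

text \<open>R^{2n} is indexed by the finite type 'n + 'n: Inl i is coordinate i, Inr i is coordinate n+i.\<close>

type_synonym ('n) mat2n = "real ^ ('n + 'n) ^ ('n + 'n)"

definition Jmat :: "('n::finite) mat2n" where
  "Jmat = (\<chi> i j. (case (i, j) of
      (Inl a, Inr b) \<Rightarrow> (if a = b then 1 else 0)
    | (Inr a, Inl b) \<Rightarrow> (if a = b then -1 else 0)
    | _ \<Rightarrow> 0))"

definition symplectic :: "('n::finite) mat2n \<Rightarrow> bool" where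
  "symplectic M \<longleftrightarrow> transpose M ** Jmat ** M = Jmat"

definition Sp :: "('n::finite) mat2n set" where
  "Sp = {M. symplectic M}"

definition symplectic_subspace :: "(real ^ ('n::finite + 'n)) set \<Rightarrow> bool" where
  "symplectic_subspace W \<longleftrightarrow> subspace W \<and>
     (\<forall>u\<in>W. u \<noteq> 0 \<longrightarrow> (\<exists>v\<in>W. u \<bullet> (Jmat *v v) \<noteq> 0))"

definition kernel :: "('n::finite) mat2n \<Rightarrow> (real ^ ('n + 'n)) set" where
  "kernel A = {x. A *v x = 0}"

definition psd_sym :: "('n::finite) mat2n \<Rightarrow> bool" where
  "psd_sym A \<longleftrightarrow> transpose A = A \<and> (\<forall>x. 0 \<le> x \<bullet> (A *v x))"

definition diag2 :: "('n::finite \<Rightarrow> real) \<Rightarrow> 'n mat2n" where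
  "diag2 d = (\<chi> i j. if i = j then (case i of Inl a \<Rightarrow> d a | Inr a \<Rightarrow> d a) else 0)"

definition symp_eigs :: "('n::{finite,linorder}) mat2n \<Rightarrow> ('n \<Rightarrow> real)" where
  "symp_eigs A = (THE d. mono d \<and> (\<forall>i. 0 \<le> d i) \<and>
      (\<exists>M \<in> Sp. transpose M ** A ** M = diag2 d))"

definition doubly_stochastic :: "real ^ ('n::finite) ^ 'n \<Rightarrow> bool" where
  "doubly_stochastic E \<longleftrightarrow> (\<forall>i j. 0 \<le> E $ i $ j) \<and>
     (\<forall>i. (\<Sum>j\<in>UNIV. E $ i $ j) = 1) \<and> (\<forall>j. (\<Sum>i\<in>UNIV. E $ i $ j) = 1)"

definition doubly_superstochastic :: "real ^ ('n::finite) ^ 'n \<Rightarrow> bool" where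
  "doubly_superstochastic S \<longleftrightarrow>
     (\<exists>E. doubly_stochastic E \<and> (\<forall>i j. E $ i $ j \<le> S $ i $ j))"

definition wsub_plus :: "('n::finite \<Rightarrow> real) \<Rightarrow> ('n \<Rightarrow> real) \<Rightarrow> bool" where
  "wsub_plus x y \<longleftrightarrow> (\<exists>S :: real ^ 'n ^ 'n. doubly_superstochastic S \<and>
     (\<forall>i j. 0 < S $ i $ j) \<and> (\<forall>i. x i = (\<Sum>j\<in>UNIV. S $ i $ j * y j)))"

definition diagonal_pos :: "('n::finite) mat2n \<Rightarrow> bool" where
  "diagonal_pos D \<longleftrightarrow> (\<forall>i j. i \<noteq> j \<longrightarrow> D $ i $ j = 0) \<and> (\<forall>i. 0 < D $ i $ i)"

end

theory Submission
  imports Defs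
begin

(* Williamson's theorem: for A as in the statement there is a symplectic M with
   M^T A M = diag2 (d(A)), and d(A) is unique once sorted.  Write A = L^T (diag2 a) L with L
   symplectic and N^T B N = diag2 b with N symplectic, where a = d(A) and b = d(B).  Given a = S b
   with S entrywise positive, conjugate diag2 b by the coordinate permutation of each pi in S_n,
   rescale coordinate i by sqrt (n S(i, pi i)) and average uniformly over S_n: each j equals pi i
   for exactly (n - 1)! permutations, so the average is diag2 a.

   The normal form is built by splitting off planes spanned by pairs (e, f) with omega(e, f) = 1
   that are invariant under T = - J A: first inside the kernel of A, which is possible because the
   kernel is symplectic, and then through a maximiser x of the Rayleigh quotient
   (T x).(A (T x)) / x.(A x), where the first-order condition forces T (T x) = - mu x.  Uniqueness
   holds because (J A)^2 is similar to diag2 (- d^2). *)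

lemma matrix_vector_mult_uminus:
  "A *v (- x) = - (A *v x)" "(- A) *v x = - (A *v x)" for A :: "real^'n^'m"
  by (simp_all add: matrix_vector_mult_def vec_eq_iff sum_negf)

lemma matrix_add_rdistrib: "(X + Y) ** M = X ** M + Y ** (M :: real^'n^'n)"
  by (simp add: matrix_matrix_mult_def vec_eq_iff sum.distrib distrib_right)

lemma inner_symmetric_matrix:
  fixes A :: "real^'n^'n"
  assumes "transpose A = A" shows "x \<bullet> (A *v y) = (A *v x) \<bullet> y"
proof -
  have "A *v x = x v* A" using transpose_matrix_vector[of A x] assms by simp
  then show ?thesis by (simp add: dot_lmul_matrix)
qed

lemma inner_congruence:
  fixes T A :: "real^'n^'n"
  shows "x \<bullet> ((transpose T ** A ** T) *v y) = (T *v x) \<bullet> (A *v (T *v y))"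
proof -
  have "x \<bullet> ((transpose T ** A ** T) *v y) = x \<bullet> ((A *v (T *v y)) v* T)"
    by (simp flip: matrix_vector_mul_assoc)
  also have "\<dots> = (T *v x) \<bullet> (A *v (T *v y))"
    by (metis dot_lmul_matrix inner_commute)
  finally show ?thesis .
qed

lemma congruence_entry:
  fixes X Y Z :: "real^'n^'n"
  shows "(transpose X ** Y ** Z) $ a $ b = column a X \<bullet> (Y *v column b Z)"
proof -
  have "(transpose X ** Y ** Z) $ a $ b = (\<Sum>s\<in>UNIV. \<Sum>r\<in>UNIV. X$r$a * Y$r$s * Z$s$b)"
    by (simp add: matrix_matrix_mult_def transpose_def sum_distrib_right)
  also have "\<dots> = (\<Sum>r\<in>UNIV. \<Sum>s\<in>UNIV. X$r$a * Y$r$s * Z$s$b)"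
    by (rule sum.swap)
  also have "\<dots> = column a X \<bullet> (Y *v column b Z)"
    by (simp add: matrix_vector_mult_def inner_vec_def column_def sum_distrib_left mult.assoc)
  finally show ?thesis .
qed

lemma congruence_cancel_inverse:
  fixes M L A :: "real^'n^'n"
  assumes "M ** L = mat 1"
  shows "transpose L ** (transpose M ** A ** M) ** L = A"
proof -
  have "transpose L ** (transpose M ** A ** M) ** L = transpose (M ** L) ** A ** (M ** L)"
    by (simp add: matrix_transpose_mul matrix_mul_assoc)
  then show ?thesis using assms by simp
qed

lemma sum_congruence:
  fixes L :: "real^'n^'n"
  shows "(\<Sum>x\<in>F. c x *\<^sub>R (transpose L ** X x ** L)) = transpose L ** (\<Sum>x\<in>F. c x *\<^sub>R X x) ** L"
proof (induction F rule: infinite_finite_induct)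
  case (insert x F)
  then show ?case
    by (simp add: matrix_add_ldistrib matrix_add_rdistrib scalar_matrix_assoc matrix_scalar_ac)
qed (simp_all add: matrix_matrix_mult_def vec_eq_iff)

lemma sum_UNIV_Plus:
  "(\<Sum>x\<in>UNIV. f x) = (\<Sum>a\<in>UNIV. f (Inl a)) + (\<Sum>b\<in>UNIV. f (Inr b))"
  for f :: "'a::finite + 'b::finite \<Rightarrow> 'c::comm_monoid_add"
  by (subst UNIV_Plus_UNIV [symmetric], subst sum.Plus) (simp_all add: o_def)

lemma vec_eq_Plus_iff:
  "x = y \<longleftrightarrow> (\<forall>a. x $ Inl a = y $ Inl a) \<and> (\<forall>a. x $ Inr a = y $ Inr a)"
  for x y :: "'a^('n::finite + 'n)"
  by (metis sum.exhaust vec_eq_iff)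

lemma mat2n_eqI:
  fixes X Y :: "('n::finite) mat2n"
  assumes "\<And>a b. X $ Inl a $ Inl b = Y $ Inl a $ Inl b" "\<And>a b. X $ Inl a $ Inr b = Y $ Inl a $ Inr b"
    "\<And>a b. X $ Inr a $ Inl b = Y $ Inr a $ Inl b" "\<And>a b. X $ Inr a $ Inr b = Y $ Inr a $ Inr b"
  shows "X = Y"
  using assms by (simp add: vec_eq_Plus_iff)

lemma Jmat_entries [simp]:
  "Jmat $ Inl a $ Inl b = 0" "Jmat $ Inr a $ Inr b = 0"
  "Jmat $ Inl a $ Inr b = (if a = b then 1 else 0)" "Jmat $ Inr a $ Inl b = (if a = b then -1 else 0)"
  by (simp_all add: Jmat_def)

lemma Jmat_mult_vec [simp]:
  "(Jmat *v x) $ Inl a = x $ Inr a" "(Jmat *v x) $ Inr a = - x $ Inl a"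
  by (simp_all add: matrix_vector_mult_def sum_UNIV_Plus if_distrib[of "\<lambda>c. c * _"] cong: if_cong)

lemma Jmat_Jmat_mult_vec: "Jmat *v (Jmat *v x) = - x"
  by (simp add: vec_eq_Plus_iff)

lemma transpose_Jmat: "transpose Jmat = - Jmat"
  by (simp add: Jmat_def transpose_def vec_eq_iff split: sum.splits)

lemma transpose_Jmat_mult_Jmat:
  "transpose Jmat ** Jmat = (mat 1 :: ('n::finite) mat2n)" "Jmat ** transpose Jmat = (mat 1 :: 'n mat2n)"
  by (simp_all add: matrix_eq transpose_Jmat matrix_vector_mult_uminus Jmat_Jmat_mult_vec
      flip: matrix_vector_mul_assoc)

lemma diag2_entries [simp]:
  "diag2 d $ Inl a $ Inl b = (if a = b then d a else 0)" "diag2 d $ Inr a $ Inr b = (if a = b then d a else 0)"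
  "diag2 d $ Inl a $ Inr b = 0" "diag2 d $ Inr a $ Inl b = 0"
  by (simp_all add: diag2_def)

lemma diag2_mult_vec [simp]:
  "(diag2 d *v x) $ Inl a = d a * x $ Inl a" "(diag2 d *v x) $ Inr a = d a * x $ Inr a"
  by (simp_all add: matrix_vector_mult_def sum_UNIV_Plus if_distrib[of "\<lambda>c. c * _"] cong: if_cong)

section \<open>The symplectic form and Hamiltonian matrices\<close>

definition symp_form :: "real^('n::finite + 'n) \<Rightarrow> real^('n + 'n) \<Rightarrow> real" where
  "symp_form x y = x \<bullet> (Jmat *v y)"

lemma symp_form_linear [simp]:
  "symp_form (x + y) z = symp_form x z + symp_form y z"
  "symp_form (x - y) z = symp_form x z - symp_form y z"
  "symp_form (c *\<^sub>R x) z = c * symp_form x z"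
  "symp_form z (x + y) = symp_form z x + symp_form z y"
  "symp_form z (x - y) = symp_form z x - symp_form z y"
  "symp_form z (c *\<^sub>R x) = c * symp_form z x"
  "symp_form (- x) z = - symp_form x z" "symp_form z (- x) = - symp_form z x"
  "symp_form 0 z = 0" "symp_form z 0 = 0"
  by (simp_all add: symp_form_def inner_add_left inner_diff_left inner_add_right inner_diff_right
      matrix_vector_right_distrib matrix_vector_mult_diff_distrib matrix_vector_mult_scaleR
      matrix_vector_mult_uminus)

lemma symp_form_swap: "symp_form y x = - symp_form x y"
  by (simp add: symp_form_def inner_vec_def sum_UNIV_Plus sum_negf algebra_simps)

lemma symp_form_self [simp]: "symp_form x x = 0"
  using symp_form_swap[of x x] by simp

lemma inner_Jmat_Jmat: "(Jmat *v x) \<bullet> (Jmat *v y) = x \<bullet> y"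
  by (simp add: inner_vec_def sum_UNIV_Plus)

definition hamiltonian :: "('n::finite) mat2n \<Rightarrow> 'n mat2n" where
  "hamiltonian A = - (Jmat ** A)"

lemma hamiltonian_mult_vec: "hamiltonian A *v x = - (Jmat *v (A *v x))"
  by (simp add: hamiltonian_def matrix_vector_mult_uminus matrix_vector_mul_assoc)

lemma inner_eq_symp_form_hamiltonian: "x \<bullet> (A *v y) = symp_form x (hamiltonian A *v y)"
  by (simp add: symp_form_def hamiltonian_mult_vec matrix_vector_mult_uminus Jmat_Jmat_mult_vec)

lemma symp_form_hamiltonian_left:
  fixes A :: "('n::finite) mat2n"
  assumes "transpose A = A"
  shows "symp_form (hamiltonian A *v x) y = - (x \<bullet> (A *v y))"
proof -
  have "symp_form (hamiltonian A *v x) y = - ((Jmat *v (A *v x)) \<bullet> (Jmat *v y))"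
    by (simp add: symp_form_def hamiltonian_mult_vec)
  also have "\<dots> = - (x \<bullet> (A *v y))"
    by (simp add: inner_Jmat_Jmat inner_symmetric_matrix[OF assms])
  finally show ?thesis .
qed

lemma hamiltonian_skew:
  fixes A :: "('n::finite) mat2n"
  assumes "transpose A = A"
  shows "(hamiltonian A *v x) \<bullet> (A *v y) = - (x \<bullet> (A *v (hamiltonian A *v y)))"
  by (simp add: inner_eq_symp_form_hamiltonian[of _ A y] symp_form_hamiltonian_left[OF assms])

lemma symplectic_mult: "symplectic M \<Longrightarrow> symplectic N \<Longrightarrow> symplectic (M ** N)"
  unfolding symplectic_def by (simp add: matrix_transpose_mul matrix_mul_assoc) (metis matrix_mul_assoc)

lemma symplectic_inverse:
  fixes M :: "('n::finite) mat2n"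
  assumes M: "symplectic M"
  obtains L where "symplectic L" "L ** M = mat 1" "M ** L = mat 1" "Jmat ** transpose L = M ** Jmat"
proof
  define L where "L = transpose Jmat ** transpose M ** Jmat"
  show "L ** M = mat 1"
    using M by (simp add: L_def symplectic_def transpose_Jmat_mult_Jmat flip: matrix_mul_assoc)
  then show M_L: "M ** L = mat 1" using matrix_left_right_inverse by blast
  show "Jmat ** transpose L = M ** Jmat"
    by (simp add: L_def matrix_transpose_mul matrix_mul_assoc transpose_Jmat_mult_Jmat)
  show "symplectic L"
    using M congruence_cancel_inverse[OF M_L, of Jmat] by (simp add: symplectic_def)
qed

section \<open>Rayleigh quotients\<close>

lemma quadratic_form_add_scaleR:
  fixes C :: "real^'n^'n"
  assumes "transpose C = C"
  shows "(x + t *\<^sub>R v) \<bullet> (C *v (x + t *\<^sub>R v))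
    = x \<bullet> (C *v x) + 2 * t * (x \<bullet> (C *v v)) + t\<^sup>2 * (v \<bullet> (C *v v))"
proof -
  have "v \<bullet> (C *v x) = x \<bullet> (C *v v)"
    by (simp add: inner_symmetric_matrix[OF assms, of v] inner_commute)
  then show ?thesis
    by (simp add: algebra_simps inner_add_left inner_add_right power2_eq_square)
qed

lemma nonneg_quadratic_imp_linear_coeff_zero:
  fixes b c :: real
  assumes "\<And>t. 0 \<le> 2 * t * b + t\<^sup>2 * c"
  shows "b = 0"
proof -
  define s where "s = 1 / (\<bar>c\<bar> + 1)"
  have s: "0 < s" "s * c < 2"
    unfolding s_def by (auto simp: field_simps)
  have "0 \<le> 2 * (- s * b) * b + (- s * b)\<^sup>2 * c" by (rule assms)
  then have "0 \<le> s * b\<^sup>2 * (s * c - 2)" by (simp add: power2_eq_square algebra_simps)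
  with s have "s * b\<^sup>2 \<le> 0" by (auto simp: zero_le_mult_iff)
  with s have "b\<^sup>2 \<le> 0" by (simp add: mult_le_0_iff)
  then show "b = 0" by simp
qed

lemma psd_sym_null_vector:
  assumes "psd_sym A" "x \<bullet> (A *v x) = 0"
  shows "A *v x = 0"
proof -
  have sym: "transpose A = A" using assms(1) by (simp add: psd_sym_def)
  have "x \<bullet> (A *v (A *v x)) = 0"
  proof (rule nonneg_quadratic_imp_linear_coeff_zero)
    fix t :: real
    have "0 \<le> (x + t *\<^sub>R (A *v x)) \<bullet> (A *v (x + t *\<^sub>R (A *v x)))"
      using assms(1) unfolding psd_sym_def by blast
    then show "0 \<le> 2 * t * (x \<bullet> (A *v (A *v x))) + t\<^sup>2 * ((A *v x) \<bullet> (A *v (A *v x)))"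
      unfolding quadratic_form_add_scaleR[OF sym] assms(2) by simp
  qed
  then show ?thesis using inner_symmetric_matrix[OF sym, of x "A *v x"] by simp
qed

lemma rayleigh_max_exists:
  fixes P Q :: "real^'n^'n"
  assumes W: "subspace W" "W \<noteq> {0}" and pos: "\<And>x. x \<in> W \<Longrightarrow> x \<noteq> 0 \<Longrightarrow> 0 < x \<bullet> (Q *v x)"
  obtains x \<mu> where "x \<in> W" "x \<noteq> 0" "x \<bullet> (P *v x) = \<mu> * (x \<bullet> (Q *v x))"
    "\<And>y. y \<in> W \<Longrightarrow> y \<bullet> (P *v y) \<le> \<mu> * (y \<bullet> (Q *v y))"
proof -
  define R where "R x = (x \<bullet> (P *v x)) / (x \<bullet> (Q *v x))" for x
  define S where "S = W \<inter> sphere 0 1"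
  have normalize: "y /\<^sub>R norm y \<in> S" if "y \<in> W" "y \<noteq> 0" for y
    using that W(1) by (simp add: S_def subspace_scale)
  have R_normalize: "R (y /\<^sub>R norm y) = R y" if "y \<noteq> 0" for y
    using that by (simp add: R_def matrix_vector_mult_scaleR)
  have S_pos: "0 < y \<bullet> (Q *v y)" if "y \<in> S" for y
    using that pos by (force simp: S_def)
  have "compact S"
    unfolding S_def using closed_Int_compact[OF closed_subspace[OF W(1)] compact_sphere] .
  moreover have "S \<noteq> {}"
    using W normalize subspace_0 by blast
  moreover have "continuous_on S R"
    unfolding R_def using S_pos by (intro continuous_intros) force
  ultimately obtain x where x: "x \<in> S" and x_max: "\<And>y. y \<in> S \<Longrightarrow> R y \<le> R x"
    using continuous_attains_sup by metis
  have "0 < x \<bullet> (Q *v x)" "x \<in> W" "x \<noteq> 0"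
    using x S_pos by (auto simp: S_def)
  moreover have "y \<bullet> (P *v y) \<le> R x * (y \<bullet> (Q *v y))" if "y \<in> W" for y
  proof (cases "y = 0")
    case False
    then have "R y \<le> R x" using x_max normalize R_normalize that by metis
    then show ?thesis using pos[OF that False] by (simp add: R_def pos_divide_le_eq)
  qed simp
  ultimately show thesis
    using that[of x "R x"] by (simp add: R_def)
qed

lemma rayleigh_max_stationary:
  fixes P Q :: "real^'n^'n"
  assumes P: "transpose P = P" and Q: "transpose Q = Q"
    and W: "subspace W" "x \<in> W" "v \<in> W"
    and max: "\<And>y. y \<in> W \<Longrightarrow> y \<bullet> (P *v y) \<le> \<mu> * (y \<bullet> (Q *v y))"
    and attained: "x \<bullet> (P *v x) = \<mu> * (x \<bullet> (Q *v x))"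
  shows "x \<bullet> (P *v v) = \<mu> * (x \<bullet> (Q *v v))"
proof -
  have "\<mu> * (x \<bullet> (Q *v v)) - x \<bullet> (P *v v) = 0"
  proof (rule nonneg_quadratic_imp_linear_coeff_zero)
    fix t :: real
    have "x + t *\<^sub>R v \<in> W" using W by (simp add: subspace_add subspace_scale)
    then have "(x + t *\<^sub>R v) \<bullet> (P *v (x + t *\<^sub>R v)) \<le> \<mu> * ((x + t *\<^sub>R v) \<bullet> (Q *v (x + t *\<^sub>R v)))"
      by (rule max)
    then show "0 \<le> 2 * t * (\<mu> * (x \<bullet> (Q *v v)) - x \<bullet> (P *v v))
        + t\<^sup>2 * (\<mu> * (v \<bullet> (Q *v v)) - v \<bullet> (P *v v))"
      unfolding quadratic_form_add_scaleR[OF P] quadratic_form_add_scaleR[OF Q] attained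
      by (simp add: algebra_simps)
  qed
  then show ?thesis by simp
qed

section \<open>Existence of Williamson's normal form\<close>

lemma symp_pair_of_rotation:
  fixes T :: "('n::finite) mat2n"
  assumes W: "subspace W" "x \<in> W" "T *v x \<in> W"
    and rot: "T *v (T *v x) = - \<mu> *\<^sub>R x" and \<mu>: "0 < \<mu>"
    and pos: "0 < symp_form x (T *v x)"
  obtains e f d where "e \<in> W" "f \<in> W" "0 < d" "T *v e = d *\<^sub>R f" "T *v f = - d *\<^sub>R e"
    "symp_form e f = 1"
proof
  define d where "d = sqrt \<mu>"
  define c where "c = sqrt (d / symp_form x (T *v x))"
  have d: "0 < d" "d * d = \<mu>" using \<mu> by (auto simp: d_def)
  have c: "c * c * symp_form x (T *v x) = d" using pos d by (simp add: c_def)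
  show "c *\<^sub>R x \<in> W" "(c / d) *\<^sub>R (T *v x) \<in> W"
    using W by (simp_all add: subspace_scale)
  show "T *v (c *\<^sub>R x) = d *\<^sub>R ((c / d) *\<^sub>R (T *v x))"
    using d by (simp add: matrix_vector_mult_scaleR)
  show "T *v ((c / d) *\<^sub>R (T *v x)) = - d *\<^sub>R (c *\<^sub>R x)"
    using d by (simp add: matrix_vector_mult_scaleR rot flip: d(2))
  have "symp_form (c *\<^sub>R x) ((c / d) *\<^sub>R (T *v x)) = c * c * symp_form x (T *v x) / d"
    by simp
  then show "symp_form (c *\<^sub>R x) ((c / d) *\<^sub>R (T *v x)) = 1"
    using c d by simp
  show "0 < d" by (fact d)
qed

lemma hamiltonian_rotation_at_rayleigh_max:
  fixes A :: "('n::finite) mat2n"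
  assumes A: "transpose A = A" and W: "subspace W" "x \<in> W"
    and inv: "\<And>y. y \<in> W \<Longrightarrow> hamiltonian A *v y \<in> W"
    and pd: "\<And>y. y \<in> W \<Longrightarrow> y \<noteq> 0 \<Longrightarrow> 0 < y \<bullet> (A *v y)"
    and max: "\<And>y. y \<in> W \<Longrightarrow>
      (hamiltonian A *v y) \<bullet> (A *v (hamiltonian A *v y)) \<le> \<mu> * (y \<bullet> (A *v y))"
    and attained: "(hamiltonian A *v x) \<bullet> (A *v (hamiltonian A *v x)) = \<mu> * (x \<bullet> (A *v x))"
  shows "hamiltonian A *v (hamiltonian A *v x) = - \<mu> *\<^sub>R x"
proof -
  let ?T = "hamiltonian A"
  define P where "P = transpose ?T ** A ** ?T"
  have P_sym: "transpose P = P"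
    using A by (simp add: P_def matrix_transpose_mul matrix_mul_assoc)
  \<comment> \<open>The first-order condition at the maximiser says that \<open>z\<close> is \<open>A\<close>-orthogonal to \<open>W\<close>.\<close>
  define z where "z = \<mu> *\<^sub>R x + ?T *v (?T *v x)"
  have z_W: "z \<in> W" unfolding z_def using W inv by (simp add: subspace_add subspace_scale)
  have "z \<bullet> (A *v v) = 0" if "v \<in> W" for v
    using rayleigh_max_stationary[OF P_sym A W that, of \<mu>] max attained
    by (simp add: P_def inner_congruence z_def inner_add_left hamiltonian_skew[OF A])
  then have "z = 0" using pd z_W by force
  then show ?thesis by (simp add: z_def add_eq_0_iff)
qed

lemma hamiltonian_symp_pair_posdef:
  fixes A :: "('n::finite) mat2n"
  assumes A: "transpose A = A" and W: "subspace W" "W \<noteq> {0}"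
    and inv: "\<And>x. x \<in> W \<Longrightarrow> hamiltonian A *v x \<in> W"
    and pd: "\<And>x. x \<in> W \<Longrightarrow> x \<noteq> 0 \<Longrightarrow> 0 < x \<bullet> (A *v x)"
  obtains e f d where "e \<in> W" "f \<in> W" "0 < d" "hamiltonian A *v e = d *\<^sub>R f"
    "hamiltonian A *v f = - d *\<^sub>R e" "symp_form e f = 1"
proof -
  let ?T = "hamiltonian A"
  obtain x \<mu> where x: "x \<in> W" "x \<noteq> 0"
    and attained: "(?T *v x) \<bullet> (A *v (?T *v x)) = \<mu> * (x \<bullet> (A *v x))"
    and max: "\<And>y. y \<in> W \<Longrightarrow> (?T *v y) \<bullet> (A *v (?T *v y)) \<le> \<mu> * (y \<bullet> (A *v y))"
    using rayleigh_max_exists[OF W pd, of "transpose ?T ** A ** ?T"] by (metis inner_congruence)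
  have x_pos: "0 < x \<bullet> (A *v x)" using pd x by blast
  have Tx: "?T *v x \<in> W" using inv x(1) .
  have "?T *v x \<noteq> 0"
    using x_pos by (auto simp: inner_eq_symp_form_hamiltonian[of x A])
  then have "0 < \<mu>"
    using pd[OF Tx] attained x_pos by (simp add: zero_less_mult_iff)
  moreover have "0 < symp_form x (?T *v x)"
    using x_pos by (simp add: inner_eq_symp_form_hamiltonian)
  ultimately show thesis
    using symp_pair_of_rotation[OF W(1) x(1) Tx]
      hamiltonian_rotation_at_rayleigh_max[OF A W(1) x(1) inv pd max attained] that
    by blast
qed

definition admissible_subspace :: "('n::finite) mat2n \<Rightarrow> (real^('n + 'n)) set \<Rightarrow> bool" where
  "admissible_subspace A W \<longleftrightarrow> subspace W \<and> (\<forall>x\<in>W. hamiltonian A *v x \<in> W) \<and>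
     (\<forall>x\<in>W. A *v x = 0 \<longrightarrow> x \<noteq> 0 \<longrightarrow> (\<exists>y\<in>W. A *v y = 0 \<and> symp_form x y \<noteq> 0))"

lemma admissible_subspace_symp_pair:
  fixes A :: "('n::finite) mat2n"
  assumes A: "psd_sym A" and W: "admissible_subspace A W" "W \<noteq> {0}"
  obtains e f d where "e \<in> W" "f \<in> W" "0 \<le> d" "hamiltonian A *v e = d *\<^sub>R f"
    "hamiltonian A *v f = - d *\<^sub>R e" "symp_form e f = 1"
    "(A *v e = 0 \<and> A *v f = 0) \<or> (\<forall>x\<in>W. A *v x = 0 \<longrightarrow> x = 0)"
proof (cases "\<exists>x\<in>W. A *v x = 0 \<and> x \<noteq> 0")
  case True
  then obtain x y where x: "x \<in> W" "A *v x = 0" and y: "y \<in> W" "A *v y = 0" "symp_form x y \<noteq> 0"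
    using W(1) unfolding admissible_subspace_def by blast
  let ?f = "(1 / symp_form x y) *\<^sub>R y"
  have "?f \<in> W" using W(1) y(1) by (simp add: admissible_subspace_def subspace_scale)
  with x y show thesis
    by (intro that[of x ?f 0]) (simp_all add: hamiltonian_mult_vec matrix_vector_mult_scaleR)
next
  case False
  have pd: "0 < x \<bullet> (A *v x)" if "x \<in> W" "x \<noteq> 0" for x
    using A False that psd_sym_null_vector[OF A, of x] by (force simp: psd_sym_def order_less_le)
  obtain e f d where "e \<in> W" "f \<in> W" "0 < d" "hamiltonian A *v e = d *\<^sub>R f"
    "hamiltonian A *v f = - d *\<^sub>R e" "symp_form e f = 1"
    using hamiltonian_symp_pair_posdef[of A W] A W pd
    by (auto simp: psd_sym_def admissible_subspace_def)
  with False show thesis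
    using that[of e f d] by auto
qed

definition symp_compl ::
    "(real^('n::finite + 'n)) set \<Rightarrow> real^('n + 'n) \<Rightarrow> real^('n + 'n) \<Rightarrow> (real^('n + 'n)) set"
  where
  "symp_compl W e f = {x \<in> W. symp_form x e = 0 \<and> symp_form x f = 0}"

lemma subspace_symp_compl: "subspace W \<Longrightarrow> subspace (symp_compl W e f)"
  by (auto simp: subspace_def symp_compl_def)

lemma symp_compl_project:
  assumes W: "subspace W" "e \<in> W" "f \<in> W" "y \<in> W" and ef: "symp_form e f = 1"
  shows "y - symp_form y f *\<^sub>R e + symp_form y e *\<^sub>R f \<in> symp_compl W e f"
proof -
  have "symp_form f e = -1" using ef symp_form_swap[of e f] by simp
  with W ef show ?thesis
    by (simp add: symp_compl_def subspace_add subspace_diff subspace_scale)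
qed

lemma dim_symp_compl:
  assumes W: "subspace W" "e \<in> W" "f \<in> W" and ef: "symp_form e f = 1"
  shows "dim (symp_compl W e f) + 2 = dim W"
proof -
  let ?C = "symp_compl W e f" and ?E = "span {e, f}"
  have fe: "symp_form f e = -1" using ef symp_form_swap[of e f] by simp
  have E_W: "?E \<subseteq> W" using W by (simp add: span_minimal)
  have span_ef: "?E = {a *\<^sub>R e + b *\<^sub>R f | a b. True}"
    by (auto simp: span_insert span_singleton algebra_simps; metis add_diff_cancel)
  have sums: "{x + y | x y. x \<in> ?C \<and> y \<in> ?E} = W"
  proof (intro set_eqI iffI)
    fix z assume "z \<in> W"
    then have "z - (symp_form z f *\<^sub>R e - symp_form z e *\<^sub>R f) \<in> ?C"
      using symp_compl_project[OF W _ ef] by (simp add: algebra_simps)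
    moreover have "symp_form z f *\<^sub>R e - symp_form z e *\<^sub>R f \<in> ?E"
      by (simp add: span_diff span_scale span_base)
    ultimately show "z \<in> {x + y | x y. x \<in> ?C \<and> y \<in> ?E}"
      by (metis (mono_tags, lifting) diff_add_cancel mem_Collect_eq)
  qed (use W E_W in \<open>auto simp: symp_compl_def subspace_add\<close>)
  have int: "dim (?C \<inter> ?E) = 0"
  proof -
    have "?C \<inter> ?E \<subseteq> {0}"
      using ef fe by (auto simp: span_ef symp_compl_def)
    then show ?thesis by simp
  qed
  have dim_E: "dim ?E = 2"
  proof -
    have "e \<notin> span {f}"
      using ef by (auto simp: span_singleton)
    moreover have "f \<noteq> 0" using ef by auto
    ultimately show ?thesis by (simp add: dim_insert)
  qed
  show ?thesis
    using dim_sums_Int[OF subspace_symp_compl[OF W(1), of e f] subspace_span[of "{e, f}"]]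
    unfolding sums int dim_E by simp
qed

lemma admissible_symp_compl:
  fixes A :: "('n::finite) mat2n"
  assumes A: "transpose A = A" and W: "admissible_subspace A W"
    and pair: "e \<in> W" "f \<in> W" "hamiltonian A *v e = d *\<^sub>R f" "hamiltonian A *v f = - d *\<^sub>R e"
      "symp_form e f = 1"
    and kernel_alt: "(A *v e = 0 \<and> A *v f = 0) \<or> (\<forall>x\<in>W. A *v x = 0 \<longrightarrow> x = 0)"
  shows "admissible_subspace A (symp_compl W e f)"
proof -
  let ?T = "hamiltonian A" and ?C = "symp_compl W e f"
  have W_sub: "subspace W" using W by (simp add: admissible_subspace_def)
  have "?T *v x \<in> ?C" if "x \<in> ?C" for x
  proof -
    have "symp_form (?T *v x) e = 0" "symp_form (?T *v x) f = 0"
      using that pair(3,4)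
      by (simp_all add: symp_form_hamiltonian_left[OF A] inner_eq_symp_form_hamiltonian[of x A]
          symp_compl_def)
    then show ?thesis using that W by (simp add: symp_compl_def admissible_subspace_def)
  qed
  moreover have "\<exists>y\<in>?C. A *v y = 0 \<and> symp_form x y \<noteq> 0"
    if x: "x \<in> ?C" "A *v x = 0" "x \<noteq> 0" for x
    using kernel_alt
  proof
    assume ef_ker: "A *v e = 0 \<and> A *v f = 0"
    obtain y where y: "y \<in> W" "A *v y = 0" "symp_form x y \<noteq> 0"
      using W x by (auto simp: admissible_subspace_def symp_compl_def)
    let ?y = "y - symp_form y f *\<^sub>R e + symp_form y e *\<^sub>R f"
    have "?y \<in> ?C" using symp_compl_project[OF W_sub pair(1,2) y(1) pair(5)] .
    moreover have "A *v ?y = 0" using y ef_ker by (simp add: algebra_simps)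
    moreover have "symp_form x ?y = symp_form x y" using x by (simp add: symp_compl_def)
    ultimately show ?thesis using y by metis
  next
    assume "\<forall>x\<in>W. A *v x = 0 \<longrightarrow> x = 0"
    then show ?thesis using x by (auto simp: symp_compl_def)
  qed
  ultimately show ?thesis
    using subspace_symp_compl[OF W_sub] by (auto simp: admissible_subspace_def)
qed

definition darboux_family ::
    "'i set \<Rightarrow> ('i \<Rightarrow> real^('n::finite + 'n)) \<Rightarrow> ('i \<Rightarrow> real^('n + 'n)) \<Rightarrow> bool"
  where
  "darboux_family I e f \<longleftrightarrow> (\<forall>i\<in>I. \<forall>j\<in>I. symp_form (e i) (f j) = (if i = j then 1 else 0) \<and>
     symp_form (e i) (e j) = 0 \<and> symp_form (f i) (f j) = 0)"

lemma darboux_family_symp_form_f_e: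
  assumes "darboux_family I e f" "i \<in> I" "j \<in> I"
  shows "symp_form (f i) (e j) = (if i = j then -1 else 0)"
  using assms symp_form_swap[of "e j" "f i"] by (auto simp: darboux_family_def)

lemma darboux_family_insert:
  assumes "darboux_family I e f" "i \<notin> I" "symp_form e0 f0 = 1"
    and "\<And>j. j \<in> I \<Longrightarrow> e j \<in> symp_compl W e0 f0 \<and> f j \<in> symp_compl W e0 f0"
  shows "darboux_family (insert i I) (e(i := e0)) (f(i := f0))"
proof -
  have "symp_form e0 (e j) = 0" "symp_form e0 (f j) = 0" "symp_form f0 (f j) = 0"
    "symp_form (e j) e0 = 0" "symp_form (e j) f0 = 0" "symp_form (f j) f0 = 0" if "j \<in> I" for j
    using assms(4)[OF that] symp_form_swap[of "e j" e0] symp_form_swap[of "f j" e0]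
      symp_form_swap[of "f j" f0] by (auto simp: symp_compl_def)
  then show ?thesis using assms(1-3) by (auto simp: darboux_family_def)
qed

lemma admissible_subspace_williamson_family:
  fixes A :: "('n::finite) mat2n" and I :: "'i set"
  assumes A: "psd_sym A" and I: "finite I" and W: "admissible_subspace A W" "dim W = 2 * card I"
  shows "\<exists>e f d. darboux_family I e f \<and>
    (\<forall>i\<in>I. e i \<in> W \<and> f i \<in> W \<and> 0 \<le> d i \<and>
      hamiltonian A *v e i = d i *\<^sub>R f i \<and> hamiltonian A *v f i = - d i *\<^sub>R e i)"
  using I W
proof (induction I arbitrary: W rule: finite_induct)
  case empty
  then show ?case by (simp add: darboux_family_def)
next
  case (insert i I)
  have "W \<noteq> {0}" using insert.prems(2) insert.hyps by auto
  then obtain e0 f0 d0 where pair: "e0 \<in> W" "f0 \<in> W" "0 \<le> d0" "hamiltonian A *v e0 = d0 *\<^sub>R f0"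
    "hamiltonian A *v f0 = - d0 *\<^sub>R e0" "symp_form e0 f0 = 1"
    "(A *v e0 = 0 \<and> A *v f0 = 0) \<or> (\<forall>x\<in>W. A *v x = 0 \<longrightarrow> x = 0)"
    using admissible_subspace_symp_pair[OF A insert.prems(1)] by blast
  have "admissible_subspace A (symp_compl W e0 f0)"
    using A admissible_symp_compl[OF _ insert.prems(1) pair(1,2,4,5,6,7)] by (simp add: psd_sym_def)
  moreover have "dim (symp_compl W e0 f0) = 2 * card I"
    using dim_symp_compl[of W e0 f0] insert pair(1,2,6) by (simp add: admissible_subspace_def)
  ultimately obtain e f d where fam: "darboux_family I e f"
    and props: "\<forall>j\<in>I. e j \<in> symp_compl W e0 f0 \<and> f j \<in> symp_compl W e0 f0 \<and> 0 \<le> d j \<and>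
      hamiltonian A *v e j = d j *\<^sub>R f j \<and> hamiltonian A *v f j = - d j *\<^sub>R e j"
    using insert.IH by blast
  have "darboux_family (insert i I) (e(i := e0)) (f(i := f0))"
    using darboux_family_insert[OF fam insert.hyps(2) pair(6)] props by blast
  moreover have "(e(i := e0)) j \<in> W \<and> (f(i := f0)) j \<in> W \<and> 0 \<le> (d(i := d0)) j \<and>
      hamiltonian A *v (e(i := e0)) j = (d(i := d0)) j *\<^sub>R (f(i := f0)) j \<and>
      hamiltonian A *v (f(i := f0)) j = - (d(i := d0)) j *\<^sub>R (e(i := e0)) j"
    if "j \<in> insert i I" for j
  proof (cases "j = i")
    case False
    then have "j \<in> I" using that by simp
    then show ?thesis using props False by (simp add: symp_compl_def)
  qed (use pair in simp)
  ultimately show ?case by blast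
qed

definition mat2n_of_columns ::
    "('n::finite \<Rightarrow> real^('n + 'n)) \<Rightarrow> ('n \<Rightarrow> real^('n + 'n)) \<Rightarrow> 'n mat2n"
  where
  "mat2n_of_columns e f = (\<chi> r c. case c of Inl i \<Rightarrow> e i $ r | Inr i \<Rightarrow> f i $ r)"

lemma column_mat2n_of_columns [simp]:
  "column (Inl i) (mat2n_of_columns e f) = e i" "column (Inr i) (mat2n_of_columns e f) = f i"
  by (simp_all add: mat2n_of_columns_def column_def vec_eq_iff)

lemma congruence_mat2n_of_columns [simp]:
  "(transpose (mat2n_of_columns e f) ** X ** mat2n_of_columns e f) $ Inl a $ Inl b = e a \<bullet> (X *v e b)"
  "(transpose (mat2n_of_columns e f) ** X ** mat2n_of_columns e f) $ Inl a $ Inr b = e a \<bullet> (X *v f b)"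
  "(transpose (mat2n_of_columns e f) ** X ** mat2n_of_columns e f) $ Inr a $ Inl b = f a \<bullet> (X *v e b)"
  "(transpose (mat2n_of_columns e f) ** X ** mat2n_of_columns e f) $ Inr a $ Inr b = f a \<bullet> (X *v f b)"
  by (simp_all add: congruence_entry)

lemma symplectic_mat2n_of_columns:
  assumes "darboux_family UNIV e f"
  shows "symplectic (mat2n_of_columns e f)"
  using assms darboux_family_symp_form_f_e[OF assms] unfolding symplectic_def
  by (intro mat2n_eqI) (auto simp: darboux_family_def symp_form_def)

lemma williamson_exists:
  fixes A :: "('n::finite) mat2n"
  assumes A: "psd_sym A" and ker: "symplectic_subspace (kernel A)"
  obtains M d where "symplectic M" "\<And>i. 0 \<le> d i" "transpose M ** A ** M = diag2 d"
proof -
  have adm: "admissible_subspace A UNIV"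
    using ker by (auto simp: admissible_subspace_def symplectic_subspace_def kernel_def symp_form_def)
  have dim_UNIV: "dim (UNIV :: (real^('n + 'n)) set) = 2 * card (UNIV :: 'n set)"
    by (simp add: card_Plus flip: UNIV_Plus_UNIV)
  obtain e f d where fam: "darboux_family (UNIV :: 'n set) e f"
    and pairs: "\<And>i. 0 \<le> d i \<and> hamiltonian A *v e i = d i *\<^sub>R f i \<and>
      hamiltonian A *v f i = - d i *\<^sub>R e i"
    using admissible_subspace_williamson_family[OF A finite adm dim_UNIV] by blast
  have "transpose (mat2n_of_columns e f) ** A ** mat2n_of_columns e f = diag2 d"
    using fam pairs darboux_family_symp_form_f_e[OF fam]
    by (intro mat2n_eqI) (auto simp: inner_eq_symp_form_hamiltonian darboux_family_def)
  with symplectic_mat2n_of_columns[OF fam] pairs show thesis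
    using that by blast
qed

definition perm_mat2n :: "('n::finite \<Rightarrow> 'n) \<Rightarrow> 'n mat2n" where
  "perm_mat2n p = (\<chi> r c. if r = map_sum p p c then 1 else 0)"

lemma congruence_perm_mat2n:
  "(transpose (perm_mat2n p) ** X ** perm_mat2n p) $ a $ b = X $ map_sum p p a $ map_sum p p b"
proof -
  have "column c (perm_mat2n p) = axis (map_sum p p c) 1" for c
    by (simp add: perm_mat2n_def column_def axis_def vec_eq_iff)
  then show ?thesis
    by (simp add: congruence_entry matrix_vector_mult_basis inner_axis' column_def)
qed

lemma symplectic_perm_mat2n: "inj p \<Longrightarrow> symplectic (perm_mat2n p)"
  unfolding symplectic_def by (intro mat2n_eqI) (auto simp: congruence_perm_mat2n inj_eq)

lemma congruence_perm_mat2n_diag2: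
  "inj p \<Longrightarrow> transpose (perm_mat2n p) ** diag2 d ** perm_mat2n p = diag2 (d \<circ> p)"
  by (intro mat2n_eqI) (auto simp: congruence_perm_mat2n inj_eq)

lemma exists_sorting_permutation:
  fixes d :: "'n::{finite,linorder} \<Rightarrow> 'a::linorder"
  obtains s where "s permutes UNIV" "mono (d \<circ> s)"
proof -
  define ys where "ys = sort_key d (sorted_list_of_set (UNIV :: 'n set))"
  have ys: "distinct ys" "set ys = UNIV" "sorted (map d ys)" "length ys = CARD('n)"
    by (simp_all add: ys_def length_sort flip: distinct_card)
  define rank where "rank i = card {j. j < i}" for i :: 'n
  have rank_less: "rank i < CARD('n)" for i
    unfolding rank_def by (rule psubset_card_mono) auto
  have rank_strict_mono: "rank i < rank i'" if "i < i'" for i i'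
    unfolding rank_def by (rule psubset_card_mono) (use that in auto)
  then have rank_mono: "mono rank" and "inj rank"
    by (auto intro!: monoI injI simp: order.order_iff_strict) (metis linorder_neqE less_irrefl)
  define s where "s i = ys ! rank i" for i
  have "inj s"
    using \<open>inj rank\<close> ys rank_less by (auto intro!: injI simp: s_def nth_eq_iff_index_eq inj_eq)
  then have "bij s" using finite_UNIV_inj_surj[of s] by (simp add: bij_def)
  then have "s permutes UNIV" by (auto intro: bij_imp_permutes)
  moreover have "mono (d \<circ> s)"
  proof (rule monoI)
    fix i i' :: 'n assume "i \<le> i'"
    then have "map d ys ! rank i \<le> map d ys ! rank i'"
      using sorted_nth_mono[OF ys(3)] rank_mono rank_less ys(4) by (simp add: monoD)
    then show "(d \<circ> s) i \<le> (d \<circ> s) i'" using rank_less ys(4) by (simp add: s_def)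
  qed
  ultimately show thesis ..
qed

lemma williamson_sorted:
  fixes A :: "('n::{finite,linorder}) mat2n"
  assumes "psd_sym A" "symplectic_subspace (kernel A)"
  obtains M d where "symplectic M" "mono d" "\<And>i. 0 \<le> d i" "transpose M ** A ** M = diag2 d"
proof -
  obtain M d where M: "symplectic M" "\<And>i. 0 \<le> d i" "transpose M ** A ** M = diag2 d"
    using williamson_exists[OF assms] by blast
  obtain s where s: "s permutes UNIV" "mono (d \<circ> s)"
    using exists_sorting_permutation by blast
  have "inj s" using s(1) by (rule permutes_inj)
  have "transpose (M ** perm_mat2n s) ** A ** (M ** perm_mat2n s)
      = transpose (perm_mat2n s) ** (transpose M ** A ** M) ** perm_mat2n s"
    by (simp add: matrix_transpose_mul matrix_mul_assoc)
  also have "\<dots> = diag2 (d \<circ> s)"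
    using M(3) congruence_perm_mat2n_diag2[OF \<open>inj s\<close>] by simp
  finally show thesis
    using that symplectic_mult[OF M(1) symplectic_perm_mat2n[OF \<open>inj s\<close>]] s(2) M(2) by simp
qed

section \<open>Uniqueness of the symplectic eigenvalues\<close>

lemma symplectic_congruence_intertwines:
  fixes M A D :: "('n::finite) mat2n"
  assumes M: "symplectic M" and D: "transpose M ** A ** M = D"
  shows "(Jmat ** A) ** M = M ** (Jmat ** D)"
proof -
  obtain L where L: "L ** M = mat 1" "M ** L = mat 1" "Jmat ** transpose L = M ** Jmat"
    using symplectic_inverse[OF M] by metis
  have "A = transpose L ** D ** L"
    using congruence_cancel_inverse[OF L(2), of A] D by simp
  then have "(Jmat ** A) ** M = (Jmat ** transpose L) ** D ** (L ** M)"
    by (simp add: matrix_mul_assoc)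
  then show ?thesis using L(1,3) by (simp add: matrix_mul_assoc)
qed

lemma Jmat_diag2_square: "(Jmat ** diag2 d) ** (Jmat ** diag2 d) = diag2 (\<lambda>i. - (d i)\<^sup>2)"
  by (subst matrix_eq) (simp add: vec_eq_Plus_iff power2_eq_square flip: matrix_vector_mul_assoc)

definition eigenspace :: "real^'n^'n \<Rightarrow> real \<Rightarrow> (real^'n) set" where
  "eigenspace Y t = {x. Y *v x = t *\<^sub>R x}"

lemma dim_eigenspace_similar:
  fixes Y M D :: "real^'n^'n"
  assumes YM: "Y ** M = M ** D" and M: "invertible M"
  shows "dim (eigenspace Y t) = dim (eigenspace D t)"
proof -
  have YM_vec: "M *v (D *v x) = Y *v (M *v x)" for x
    using YM by (simp add: matrix_vector_mul_assoc)
  have "eigenspace Y t = (\<lambda>x. M *v x) ` eigenspace D t"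
  proof (intro set_eqI iffI)
    fix y assume y: "y \<in> eigenspace Y t"
    obtain L where "M ** L = mat 1" using M by (auto simp: invertible_def)
    then have y_eq: "M *v (L *v y) = y" by (simp add: matrix_vector_mul_assoc)
    have "M *v (D *v (L *v y)) = Y *v (M *v (L *v y))"
      by (rule YM_vec)
    also have "\<dots> = M *v (t *\<^sub>R (L *v y))"
      using y y_eq by (simp add: eigenspace_def matrix_vector_mult_scaleR)
    finally have "D *v (L *v y) = t *\<^sub>R (L *v y)"
      by (rule injD[OF inj_matrix_vector_mult[OF M]])
    then have "L *v y \<in> eigenspace D t" by (simp add: eigenspace_def)
    then show "y \<in> (\<lambda>x. M *v x) ` eigenspace D t"
      by (rule rev_image_eqI) (simp add: y_eq)
  next
    fix y assume "y \<in> (\<lambda>x. M *v x) ` eigenspace D t"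
    then show "y \<in> eigenspace Y t"
      by (auto simp: eigenspace_def matrix_vector_mult_scaleR simp flip: YM_vec)
  qed
  then show ?thesis
    using dim_image_eq[OF matrix_vector_mul_linear inj_on_subset[OF inj_matrix_vector_mult[OF M]]]
    by simp
qed

lemma dim_eigenspace_diag2:
  fixes g :: "'n::finite \<Rightarrow> real"
  shows "dim (eigenspace (diag2 g) t) = 2 * card {i. g i = t}"
proof -
  let ?S = "{i. g i = t}"
  have "x \<in> eigenspace (diag2 g) t \<longleftrightarrow>
      (\<forall>a. g a \<noteq> t \<longrightarrow> x $ Inl a = 0) \<and> (\<forall>a. g a \<noteq> t \<longrightarrow> x $ Inr a = 0)" for x
    by (auto simp: eigenspace_def vec_eq_Plus_iff)
  then have "eigenspace (diag2 g) t = {x. \<forall>k. k \<notin> ?S <+> ?S \<longrightarrow> x $ k = 0}"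
    by (auto simp: split_sum_all)
  moreover have "vec.dim {x :: real^('n + 'n). \<forall>k. k \<notin> ?S <+> ?S \<longrightarrow> x $ k = 0} = card (?S <+> ?S)"
    by (rule dim_substandard_cart)
  ultimately have "dim (eigenspace (diag2 g) t) = card (?S <+> ?S)"
    by (simp add: dim_vec_eq)
  then show ?thesis by (simp add: card_Plus)
qed

lemma mono_eqI_card_level_sets:
  fixes d e :: "'n::{finite,linorder} \<Rightarrow> 'a::linorder"
  assumes "mono d" "mono e" "\<And>s. card {i. d i = s} = card {i. e i = s}"
  shows "d = e"
proof -
  define xs where "xs = sorted_list_of_set (UNIV :: 'n set)"
  have xs: "distinct xs" "set xs = UNIV" "sorted xs" by (simp_all add: xs_def)
  have "count (mset (map g xs)) s = card {i. g i = s}" for g :: "'n \<Rightarrow> 'a" and s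
    using xs by (simp add: count_image_mset vimage_def flip: mset_set_set)
  then have "mset (map d xs) = mset (map e xs)"
    using assms(3) by (intro multiset_eqI) simp
  moreover have "sorted (map d xs)" "sorted (map e xs)"
    using assms(1,2) xs(3) by (simp_all add: sorted_map_mono mono_imp_mono_on)
  ultimately have "map d xs = map e xs" by (metis properties_for_sort)
  then show ?thesis using xs(2) by (simp add: fun_eq_iff)
qed

lemma dim_eigenspace_Jmat_square:
  fixes A :: "('n::finite) mat2n"
  assumes K: "symplectic K" "transpose K ** A ** K = diag2 g"
  shows "dim (eigenspace ((Jmat ** A) ** (Jmat ** A)) t) = 2 * card {i. - (g i)\<^sup>2 = t}"
proof -
  note intertwines = symplectic_congruence_intertwines[OF K]
  have "((Jmat ** A) ** (Jmat ** A)) ** K = (Jmat ** A) ** ((Jmat ** A) ** K)"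
    by (simp only: matrix_mul_assoc)
  also have "\<dots> = ((Jmat ** A) ** K) ** (Jmat ** diag2 g)"
    by (simp only: intertwines matrix_mul_assoc)
  also have "\<dots> = K ** ((Jmat ** diag2 g) ** (Jmat ** diag2 g))"
    by (simp only: intertwines matrix_mul_assoc)
  finally have "((Jmat ** A) ** (Jmat ** A)) ** K = K ** ((Jmat ** diag2 g) ** (Jmat ** diag2 g))" .
  moreover have "invertible K"
    using symplectic_inverse[OF K(1)] by (metis invertible_def)
  ultimately show ?thesis
    by (simp add: dim_eigenspace_similar dim_eigenspace_diag2 Jmat_diag2_square)
qed

lemma williamson_unique:
  fixes A :: "('n::{finite,linorder}) mat2n"
  assumes M: "symplectic M" "transpose M ** A ** M = diag2 d" "mono d" "\<And>i. 0 \<le> d i"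
    and N: "symplectic N" "transpose N ** A ** N = diag2 e" "mono e" "\<And>i. 0 \<le> e i"
  shows "d = e"
proof -
  have "card {i. d i = s} = card {i. e i = s}" for s
  proof (cases "0 \<le> s")
    case True
    then have "{i. d i = s} = {i. (d i)\<^sup>2 = s\<^sup>2}" "{i. e i = s} = {i. (e i)\<^sup>2 = s\<^sup>2}"
      using M(4) N(4) by (auto simp: power2_eq_iff_nonneg)
    then show ?thesis
      using dim_eigenspace_Jmat_square[OF M(1,2), of "- s\<^sup>2"]
        dim_eigenspace_Jmat_square[OF N(1,2), of "- s\<^sup>2"] by simp
  next
    case False
    then have "{i. d i = s} = {}" "{i. e i = s} = {}" using M(4) N(4) by force+
    then show ?thesis by simp
  qed
  then show ?thesis using mono_eqI_card_level_sets[OF M(3) N(3)] by blast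
qed

lemma symp_eigs_williamson:
  fixes A :: "('n::{finite,linorder}) mat2n"
  assumes "psd_sym A" "symplectic_subspace (kernel A)"
  obtains M where "M \<in> Sp" "transpose M ** A ** M = diag2 (symp_eigs A)"
proof -
  obtain M d where M: "symplectic M" "mono d" "\<And>i. 0 \<le> d i" "transpose M ** A ** M = diag2 d"
    using williamson_sorted[OF assms] by blast
  have "symp_eigs A = d"
    unfolding symp_eigs_def
  proof (rule the_equality)
    show "mono d \<and> (\<forall>i. 0 \<le> d i) \<and> (\<exists>M\<in>Sp. transpose M ** A ** M = diag2 d)"
      using M by (auto simp: Sp_def)
  next
    fix e assume "mono e \<and> (\<forall>i. 0 \<le> e i) \<and> (\<exists>N\<in>Sp. transpose N ** A ** N = diag2 e)"
    then show "e = d"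
      using williamson_unique[OF M(1,4,2,3)] by (auto simp: Sp_def)
  qed
  then show thesis using that M by (simp add: Sp_def)
qed

section \<open>Averaging over permutations\<close>

lemma transpose_diag2: "transpose (diag2 d) = diag2 d"
  by (intro mat2n_eqI) (simp_all add: transpose_def)

lemma diag2_mult: "diag2 x ** diag2 y = diag2 (\<lambda>i. x i * y i)"
  by (subst matrix_eq) (simp add: vec_eq_Plus_iff mult.assoc flip: matrix_vector_mul_assoc)

lemma sum_scaleR_diag2: "(\<Sum>x\<in>F. c x *\<^sub>R diag2 (g x)) = diag2 (\<lambda>i. \<Sum>x\<in>F. c x * g x i)"
  by (intro mat2n_eqI) (auto simp: if_distrib sum.neutral cong: if_cong)

lemma diagonal_pos_diag2: "(\<And>i. 0 < c i) \<Longrightarrow> diagonal_pos (diag2 c)"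
  by (auto simp: diagonal_pos_def diag2_def split: sum.splits)

lemma card_mult_sum_permutations_apply:
  fixes h :: "'n::finite \<Rightarrow> real"
  shows "real CARD('n) * (\<Sum>\<pi> | \<pi> permutes (UNIV :: 'n set). h (\<pi> i))
    = fact CARD('n) * (\<Sum>j\<in>UNIV. h j)"
proof -
  let ?P = "{\<pi>. \<pi> permutes (UNIV :: 'n set)}"
  have same: "(\<Sum>\<pi>\<in>?P. h (\<pi> k)) = (\<Sum>\<pi>\<in>?P. h (\<pi> i))" for k
  proof -
    have "Transposition.transpose i k permutes (UNIV :: 'n set)" by (rule permutes_swap_id) auto
    then have "(\<Sum>\<pi>\<in>?P. h (\<pi> k)) = (\<Sum>\<pi>\<in>?P. h ((\<pi> \<circ> Transposition.transpose i k) k))"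
      by (rule sum_permutations_compose_right)
    then show ?thesis by simp
  qed
  have "real CARD('n) * (\<Sum>\<pi>\<in>?P. h (\<pi> i)) = (\<Sum>k\<in>(UNIV :: 'n set). \<Sum>\<pi>\<in>?P. h (\<pi> i))"
    by simp
  also have "\<dots> = (\<Sum>k\<in>UNIV. \<Sum>\<pi>\<in>?P. h (\<pi> k))"
    by (rule sum.cong[OF refl same[symmetric]])
  also have "\<dots> = (\<Sum>\<pi>\<in>?P. \<Sum>k\<in>UNIV. h (\<pi> k))"
    by (rule sum.swap)
  also have "\<dots> = (\<Sum>\<pi>\<in>?P. \<Sum>j\<in>UNIV. h j)"
  proof (rule sum.cong[OF refl])
    fix \<pi> assume "\<pi> \<in> ?P"
    then show "(\<Sum>k\<in>UNIV. h (\<pi> k)) = (\<Sum>j\<in>UNIV. h j)"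
      using sum.permute[of \<pi> UNIV h] by (simp add: comp_def)
  qed
  also have "\<dots> = fact CARD('n) * (\<Sum>j\<in>UNIV. h j)"
    by (simp add: card_permutations)
  finally show ?thesis .
qed

lemma diag2_permutation_average:
  fixes a b :: "'n::finite \<Rightarrow> real" and S :: "real^'n^'n" and N B :: "'n mat2n"
  assumes S_pos: "\<And>i j. 0 < S $ i $ j" and a: "\<And>i. a i = (\<Sum>j\<in>UNIV. S $ i $ j * b j)"
    and N: "transpose N ** B ** N = diag2 b"
  defines "D \<pi> \<equiv> diag2 (\<lambda>i. sqrt (CARD('n) * S $ i $ \<pi> i))"
  shows "diag2 a = (\<Sum>\<pi> | \<pi> permutes (UNIV :: 'n set). (1 / fact CARD('n)) *\<^sub>R
    (transpose (N ** perm_mat2n \<pi> ** D \<pi>) ** B ** (N ** perm_mat2n \<pi> ** D \<pi>)))"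
proof -
  let ?P = "{\<pi>. \<pi> permutes (UNIV :: 'n set)}"
  define g where "g \<pi> i = CARD('n) * S $ i $ \<pi> i * b (\<pi> i)" for \<pi> i
  have "transpose (N ** perm_mat2n \<pi> ** D \<pi>) ** B ** (N ** perm_mat2n \<pi> ** D \<pi>) = diag2 (g \<pi>)"
    if "\<pi> \<in> ?P" for \<pi>
  proof -
    have "inj \<pi>" using that by (simp add: permutes_inj)
    have "transpose (N ** perm_mat2n \<pi> ** D \<pi>) ** B ** (N ** perm_mat2n \<pi> ** D \<pi>)
        = transpose (D \<pi>) ** (transpose (perm_mat2n \<pi>) ** (transpose N ** B ** N) ** perm_mat2n \<pi>) ** D \<pi>"
      by (simp add: matrix_transpose_mul matrix_mul_assoc)
    also have "\<dots> = diag2 (g \<pi>)"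
      using S_pos
      by (simp add: N congruence_perm_mat2n_diag2[OF \<open>inj \<pi>\<close>] D_def transpose_diag2 diag2_mult)
        (simp add: g_def[abs_def] algebra_simps less_imp_le)
    finally show ?thesis .
  qed
  then have "(\<Sum>\<pi>\<in>?P. (1 / fact CARD('n)) *\<^sub>R
      (transpose (N ** perm_mat2n \<pi> ** D \<pi>) ** B ** (N ** perm_mat2n \<pi> ** D \<pi>)))
      = (\<Sum>\<pi>\<in>?P. (1 / fact CARD('n)) *\<^sub>R diag2 (g \<pi>))"
    by simp
  also have "\<dots> = diag2 a"
    unfolding sum_scaleR_diag2
  proof (intro arg_cong[where f = diag2] ext)
    fix i
    have "(\<Sum>\<pi>\<in>?P. 1 / fact CARD('n) * g \<pi> i)
        = real CARD('n) * (\<Sum>\<pi>\<in>?P. S $ i $ \<pi> i * b (\<pi> i)) / fact CARD('n)"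
      by (simp add: g_def sum_distrib_left sum_divide_distrib mult_ac)
    also have "\<dots> = a i"
      using card_mult_sum_permutations_apply[of "\<lambda>j. S $ i $ j * b j" i] by (simp add: a)
    finally show "(\<Sum>\<pi>\<in>?P. 1 / fact CARD('n) * g \<pi> i) = a i" .
  qed
  finally show ?thesis by simp
qed

theorem theorem3p2:
  fixes A B :: "('n::{finite,linorder}) mat2n"
  assumes "psd_sym A" and "psd_sym B"
    and "symplectic_subspace (kernel A)" and "symplectic_subspace (kernel B)"
    and "wsub_plus (symp_eigs A) (symp_eigs B)"
  shows "\<exists>(p :: ('n \<Rightarrow> 'n) \<Rightarrow> real) (K :: ('n \<Rightarrow> 'n) \<Rightarrow> 'n mat2n)
            (D :: ('n \<Rightarrow> 'n) \<Rightarrow> 'n mat2n) (M :: 'n mat2n).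
           (\<forall>\<pi>. \<pi> permutes (UNIV :: 'n set) \<longrightarrow>
                0 \<le> p \<pi> \<and> K \<pi> \<in> Sp \<and> diagonal_pos (D \<pi>)) \<and>
           (\<Sum>\<pi> \<in> {\<pi>. \<pi> permutes (UNIV :: 'n set)}. p \<pi>) = 1 \<and>
           M \<in> Sp \<and>
           A = (\<Sum>\<pi> \<in> {\<pi>. \<pi> permutes (UNIV :: 'n set)}.
                  p \<pi> *\<^sub>R (transpose (K \<pi> ** D \<pi> ** M) ** B ** (K \<pi> ** D \<pi> ** M)))"
proof -
  obtain MA where MA: "MA \<in> Sp" "transpose MA ** A ** MA = diag2 (symp_eigs A)"
    using symp_eigs_williamson[OF assms(1,3)] .
  obtain MB where MB: "MB \<in> Sp" "transpose MB ** B ** MB = diag2 (symp_eigs B)"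
    using symp_eigs_williamson[OF assms(2,4)] .
  obtain S where S: "\<And>i j. 0 < S $ i $ j" "\<And>i. symp_eigs A i = (\<Sum>j\<in>UNIV. S $ i $ j * symp_eigs B j)"
    using assms(5) unfolding wsub_plus_def by blast
  obtain L where L: "symplectic L" "MA ** L = mat 1"
    using symplectic_inverse MA(1) unfolding Sp_def by blast
  define p :: "('n \<Rightarrow> 'n) \<Rightarrow> real" where "p \<pi> = 1 / fact CARD('n)" for \<pi>
  define K where "K \<pi> = MB ** perm_mat2n \<pi>" for \<pi> :: "'n \<Rightarrow> 'n"
  define D where "D \<pi> = diag2 (\<lambda>i. sqrt (CARD('n) * S $ i $ \<pi> i))" for \<pi> :: "'n \<Rightarrow> 'n"
  have "A = transpose L ** diag2 (symp_eigs A) ** L"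
    using congruence_cancel_inverse[OF L(2), of A] unfolding MA(2) by simp
  also have "\<dots> = (\<Sum>\<pi> | \<pi> permutes UNIV.
      p \<pi> *\<^sub>R (transpose (K \<pi> ** D \<pi> ** L) ** B ** (K \<pi> ** D \<pi> ** L)))"
    unfolding diag2_permutation_average[OF S MB(2)] sum_congruence[symmetric]
    by (simp add: p_def K_def D_def matrix_transpose_mul matrix_mul_assoc)
  finally have "A = (\<Sum>\<pi> | \<pi> permutes UNIV.
      p \<pi> *\<^sub>R (transpose (K \<pi> ** D \<pi> ** L) ** B ** (K \<pi> ** D \<pi> ** L)))" .
  moreover have "K \<pi> \<in> Sp \<and> diagonal_pos (D \<pi>)" if "\<pi> permutes UNIV" for \<pi>
    using MB(1) symplectic_mult symplectic_perm_mat2n[OF permutes_inj[OF that]] S(1)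
    by (auto simp: K_def D_def Sp_def intro!: diagonal_pos_diag2)
  moreover have "(\<Sum>\<pi> | \<pi> permutes (UNIV :: 'n set). p \<pi>) = 1"
    by (simp add: p_def card_permutations)
  moreover have "L \<in> Sp" "\<And>\<pi>. 0 \<le> p \<pi>"
    using L(1) by (simp_all add: Sp_def p_def)
  ultimately show ?thesis by blast
qed

end
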